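(* A causal graph dynamics $F:\mathcal{G}_{\Sigma,\Delta,\pi}\to\mathcal{G}_{\Sigma,\Delta,\pi}$ is monotonic for the subgraph order if and only if it is a left Kan extension, i.e. there exist $r\ge 0$ and a monotonic function $f:\mathcal{D}^r_{\Sigma,\Delta,\pi}\to\mathcal{G}_{\Sigma,\Delta,\pi}$ (subdisk order to subgraph order) such that for every graph $G$ the set $\{f(D)\mid D\in\mathcal{D}^r_{\Sigma,\Delta,\pi},\ i(D)\subseteq G\}$ has a supremum in $(\mathcal{G}_{\Sigma,\Delta,\pi},\subseteq)$ equal to $F(G)$, where $i((H,c))=H$ is the pointer dropping function.
   Context: Fix an uncountably infinite set $\mathcal{V}$ of vertex names, sets $\Sigma,\Delta$ and a finite port set $\pi$. A graph $G$: countable $V(G)\subset\mathcal{V}$; a set $E(G)$ of pairwise disjoint two-element subsets of $V(G)\times\pi$; partial labelings $\sigma(G):V(G)\rightharpoonup\Sigma$, $\delta(G):E(G)\rightharpoonup\Delta$. $\mathcal{G}_{\Sigma,\Delta,\pi}$ is the set of graphs. Subgraph order $G\subseteq H$: componentwise inclusion of $V,E,\sigma,\delta$ (partial functions as sets of pairs); for pointed graphs $(G,v)\subseteq(H,u)$ iff $G\subseteq H$ and $v=u$ (subdisk order). Consistency of two graphs: edge sets jointly pairwise disjoint and labelings agreeing on common domains; union and intersection are componentwise; $\varnothing$ is the empty graph. With $d_G$ the shortest-path distance and $B_G(c,r)$ the ball, the disk $G^r_c=(H,c)$ has $V(H)=B_G(c,r+1)$, $E(H)$ = edges of $G$ with an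 endpoint in $B_G(c,r)$, $\sigma(H)=\sigma(G)|_{B_G(c,r)}$, $\delta(H)=\delta(G)|_{E(H)}$; $\mathcal{D}^r_{\Sigma,\Delta,\pi}$ is the set of radius-$r$ disks. Renamings are bijections of $\mathcal{V}$ acting naturally on edges, graphs and pointed graphs. A local rule of radius $r$ is $f:\mathcal{D}^r\to\mathcal{G}$ satisfying: (1) every renaming $R$ has a renaming $R'$ with $f\circ R=R'\circ f$; (2) families of disks with empty intersection have images with empty intersection; (3) $|V(f(D))|$ uniformly bounded; (4) $f(G^r_u)$ and $f(G^r_v)$ consistent for all $G,u,v$. A CGD is $F(G)=\bigcup_{v\in V(G)}f(G^r_v)$ for some local rule $f$. *)

theory Defs
  imports Main "HOL-Library.Countable_Set"
begin

text \<open>Partial labelings are represented as sets of pairs (single-valued relations),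
  so that the subgraph order, union and intersection are literally componentwise.\<close>

record ('v, 'p, 's, 'd) graph =
  verts :: "'v set"
  edges :: "('v \<times> 'p) set set"
  vlab  :: "('v \<times> 's) set"
  elab  :: "(('v \<times> 'p) set \<times> 'd) set"

definition wf_graph :: "('v, 'p, 's, 'd) graph \<Rightarrow> bool" where
  "wf_graph G \<longleftrightarrow>
     countable (verts G) \<and>
     (\<forall>e\<in>edges G. card e = 2 \<and> e \<subseteq> verts G \<times> UNIV) \<and>
     (\<forall>e1\<in>edges G. \<forall>e2\<in>edges G. e1 \<noteq> e2 \<longrightarrow> e1 \<inter> e2 = {}) \<and>
     single_valued (vlab G) \<and> Domain (vlab G) \<subseteq> verts G \<and>
     single_valued (elab G) \<and> Domain (elab G) \<subseteq> edges G"

definition Graphs :: "('v, 'p, 's, 'd) graph set" where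
  "Graphs = {G. wf_graph G}"

definition subgraph :: "('v, 'p, 's, 'd) graph \<Rightarrow> ('v, 'p, 's, 'd) graph \<Rightarrow> bool" where
  "subgraph G H \<longleftrightarrow> verts G \<subseteq> verts H \<and> edges G \<subseteq> edges H \<and>
                      vlab G \<subseteq> vlab H \<and> elab G \<subseteq> elab H"

definition subdisk :: "('v, 'p, 's, 'd) graph \<times> 'v \<Rightarrow> ('v, 'p, 's, 'd) graph \<times> 'v \<Rightarrow> bool" where
  "subdisk D D' \<longleftrightarrow> subgraph (fst D) (fst D') \<and> snd D = snd D'"

definition empty_graph :: "('v, 'p, 's, 'd) graph" where
  "empty_graph = \<lparr>verts = {}, edges = {}, vlab = {}, elab = {}\<rparr>"

definition Gunion :: "('v, 'p, 's, 'd) graph set \<Rightarrow> ('v, 'p, 's, 'd) graph" where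
  "Gunion S = \<lparr>verts = \<Union>(verts ` S), edges = \<Union>(edges ` S),
               vlab = \<Union>(vlab ` S), elab = \<Union>(elab ` S)\<rparr>"

definition Ginter :: "('v, 'p, 's, 'd) graph set \<Rightarrow> ('v, 'p, 's, 'd) graph" where
  "Ginter S = \<lparr>verts = \<Inter>(verts ` S), edges = \<Inter>(edges ` S),
               vlab = \<Inter>(vlab ` S), elab = \<Inter>(elab ` S)\<rparr>"

definition consistent :: "('v, 'p, 's, 'd) graph \<Rightarrow> ('v, 'p, 's, 'd) graph \<Rightarrow> bool" where
  "consistent G H \<longleftrightarrow>
     (\<forall>e1\<in>edges G \<union> edges H. \<forall>e2\<in>edges G \<union> edges H. e1 \<noteq> e2 \<longrightarrow> e1 \<inter> e2 = {}) \<and>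
     single_valued (vlab G \<union> vlab H) \<and> single_valued (elab G \<union> elab H)"

definition adj :: "('v, 'p, 's, 'd) graph \<Rightarrow> ('v \<times> 'v) set" where
  "adj G = {(u, v). \<exists>e\<in>edges G. \<exists>p q. (u, p) \<in> e \<and> (v, q) \<in> e}"

definition ball :: "('v, 'p, 's, 'd) graph \<Rightarrow> 'v \<Rightarrow> nat \<Rightarrow> 'v set" where
  "ball G c r = {v. \<exists>k\<le>r. (c, v) \<in> (adj G) ^^ k}"

definition disk :: "nat \<Rightarrow> ('v, 'p, 's, 'd) graph \<Rightarrow> 'v \<Rightarrow> ('v, 'p, 's, 'd) graph \<times> 'v" where
  "disk r G c =
     (\<lparr>verts = ball G c (Suc r),
       edges = {e \<in> edges G. \<exists>v p. (v, p) \<in> e \<and> v \<in> ball G c r},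
       vlab = {(v, a) \<in> vlab G. v \<in> ball G c r},
       elab = {(e, a) \<in> elab G. \<exists>v p. (v, p) \<in> e \<and> v \<in> ball G c r}\<rparr>, c)"

definition Disks :: "nat \<Rightarrow> (('v, 'p, 's, 'd) graph \<times> 'v) set" where
  "Disks r = {disk r G c | G c. wf_graph G \<and> c \<in> verts G}"

definition rn_edge :: "('v \<Rightarrow> 'v) \<Rightarrow> ('v \<times> 'p) set \<Rightarrow> ('v \<times> 'p) set" where
  "rn_edge R e = (\<lambda>(v, p). (R v, p)) ` e"

definition rename :: "('v \<Rightarrow> 'v) \<Rightarrow> ('v, 'p, 's, 'd) graph \<Rightarrow> ('v, 'p, 's, 'd) graph" where
  "rename R G = \<lparr>verts = R ` verts G, edges = rn_edge R ` edges G,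
                 vlab = (\<lambda>(v, a). (R v, a)) ` vlab G,
                 elab = (\<lambda>(e, a). (rn_edge R e, a)) ` elab G\<rparr>"

definition prename :: "('v \<Rightarrow> 'v) \<Rightarrow> ('v, 'p, 's, 'd) graph \<times> 'v \<Rightarrow> ('v, 'p, 's, 'd) graph \<times> 'v" where
  "prename R D = (rename R (fst D), R (snd D))"

definition local_rule :: "nat \<Rightarrow> (('v, 'p, 's, 'd) graph \<times> 'v \<Rightarrow> ('v, 'p, 's, 'd) graph) \<Rightarrow> bool" where
  "local_rule r f \<longleftrightarrow>
     (\<forall>D\<in>Disks r. wf_graph (f D)) \<and>
     (\<forall>R. bij R \<longrightarrow> (\<exists>R'. bij R' \<and> (\<forall>D\<in>Disks r. f (prename R D) = rename R' (f D)))) \<and>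
     (\<forall>S. S \<subseteq> Disks r \<and> Ginter (fst ` S) = empty_graph \<longrightarrow> Ginter (f ` S) = empty_graph) \<and>
     (\<exists>b::nat. \<forall>D\<in>Disks r. finite (verts (f D)) \<and> card (verts (f D)) \<le> b) \<and>
     (\<forall>G u v. wf_graph G \<and> u \<in> verts G \<and> v \<in> verts G \<longrightarrow>
              consistent (f (disk r G u)) (f (disk r G v)))"

definition is_CGD :: "(('v, 'p, 's, 'd) graph \<Rightarrow> ('v, 'p, 's, 'd) graph) \<Rightarrow> bool" where
  "is_CGD F \<longleftrightarrow> (\<exists>r f. local_rule r f \<and>
       (\<forall>G\<in>Graphs. F G = Gunion {f (disk r G v) | v. v \<in> verts G}))"

definition monotonic_dyn :: "(('v, 'p, 's, 'd) graph \<Rightarrow> ('v, 'p, 's, 'd) graph) \<Rightarrow> bool" where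
  "monotonic_dyn F \<longleftrightarrow> (\<forall>G\<in>Graphs. \<forall>H\<in>Graphs. subgraph G H \<longrightarrow> subgraph (F G) (F H))"

definition is_sup :: "('v, 'p, 's, 'd) graph set \<Rightarrow> ('v, 'p, 's, 'd) graph \<Rightarrow> bool" where
  "is_sup S X \<longleftrightarrow> X \<in> Graphs \<and> (\<forall>Y\<in>S. subgraph Y X) \<and>
                  (\<forall>Z\<in>Graphs. (\<forall>Y\<in>S. subgraph Y Z) \<longrightarrow> subgraph X Z)"

definition left_Kan_extension :: "(('v, 'p, 's, 'd) graph \<Rightarrow> ('v, 'p, 's, 'd) graph) \<Rightarrow> bool" where
  "left_Kan_extension F \<longleftrightarrow>
     (\<exists>(r::nat) (f :: ('v, 'p, 's, 'd) graph \<times> 'v \<Rightarrow> ('v, 'p, 's, 'd) graph).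
        (\<forall>D\<in>Disks r. f D \<in> Graphs) \<and>
        (\<forall>D\<in>Disks r. \<forall>D'\<in>Disks r. subdisk D D' \<longrightarrow> subgraph (f D) (f D')) \<and>
        (\<forall>G\<in>Graphs. is_sup {f D | D. D \<in> Disks r \<and> subgraph (fst D) G} (F G)))"

end

theory Submission
  imports Defs
begin

text \<open>If F is monotonic, it is the left Kan extension of its own restriction
  F \<circ> fst to radius-r disks, r being the radius of a local rule f of F:
  monotonicity makes F G an upper bound of all F D with D \<subseteq> G, and every piece
  f (disk r G v) of F G already occurs in F (fst (disk r G v)) because the disk of
  a disk around its centre is the disk itself. Conversely, a supremum over a family
  that grows with G is monotonic in G.\<close>

lemma subgraph_trans: "subgraph A B \<Longrightarrow> subgraph B C \<Longrightarrow> subgraph A C"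
  unfolding subgraph_def by blast

lemma subgraph_Gunion: "Y \<in> S \<Longrightarrow> subgraph Y (Gunion S)"
  unfolding subgraph_def Gunion_def by auto

lemma Gunion_least: "(\<And>Y. Y \<in> S \<Longrightarrow> subgraph Y Z) \<Longrightarrow> subgraph (Gunion S) Z"
  unfolding subgraph_def Gunion_def by (simp add: UN_subset_iff)

lemma is_sup_mono: "is_sup S X \<Longrightarrow> is_sup T Y \<Longrightarrow> S \<subseteq> T \<Longrightarrow> subgraph X Y"
  unfolding is_sup_def by blast

lemma wf_graphD:
  assumes "wf_graph G"
  shows "countable (verts G)"
    and "\<And>e. e \<in> edges G \<Longrightarrow> card e = 2"
    and "\<And>e. e \<in> edges G \<Longrightarrow> e \<subseteq> verts G \<times> UNIV"
    and "\<And>e1 e2. e1 \<in> edges G \<Longrightarrow> e2 \<in> edges G \<Longrightarrow> e1 \<noteq> e2 \<Longrightarrow> e1 \<inter> e2 = {}"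
    and "single_valued (vlab G)" "Domain (vlab G) \<subseteq> verts G"
    and "single_valued (elab G)" "Domain (elab G) \<subseteq> edges G"
  using assms unfolding wf_graph_def by (simp_all only: Ball_def) blast+

lemma wf_graphI:
  assumes "countable (verts G)"
    and "\<And>e. e \<in> edges G \<Longrightarrow> card e = 2 \<and> e \<subseteq> verts G \<times> UNIV"
    and "\<And>e1 e2. e1 \<in> edges G \<Longrightarrow> e2 \<in> edges G \<Longrightarrow> e1 \<noteq> e2 \<Longrightarrow> e1 \<inter> e2 = {}"
    and "single_valued (vlab G)" "Domain (vlab G) \<subseteq> verts G"
    and "single_valued (elab G)" "Domain (elab G) \<subseteq> edges G"
  shows "wf_graph G"
  using assms unfolding wf_graph_def by (intro conjI ballI impI) simp_all

lemma wf_graph_subgraph: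
  assumes G: "wf_graph G" and "subgraph H G"
    and "\<And>e. e \<in> edges H \<Longrightarrow> e \<subseteq> verts H \<times> UNIV"
    and "Domain (vlab H) \<subseteq> verts H" "Domain (elab H) \<subseteq> edges H"
  shows "wf_graph H"
proof -
  have sub: "verts H \<subseteq> verts G" "edges H \<subseteq> edges G" "vlab H \<subseteq> vlab G" "elab H \<subseteq> elab G"
    using assms(2) unfolding subgraph_def by blast+
  show ?thesis
  proof (rule wf_graphI)
    show "countable (verts H)"
      using countable_subset[OF sub(1) wf_graphD(1)[OF G]] .
    show "single_valued (vlab H)" "single_valued (elab H)"
      using single_valued_subset sub(3,4) wf_graphD(5,7)[OF G] by blast+
    show "card e = 2 \<and> e \<subseteq> verts H \<times> UNIV" if "e \<in> edges H" for e
      using that sub(2) wf_graphD(2)[OF G] assms(3) by blast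
    show "e1 \<inter> e2 = {}" if "e1 \<in> edges H" "e2 \<in> edges H" "e1 \<noteq> e2" for e1 e2
      using that sub(2) wf_graphD(4)[OF G] by blast
  qed (use assms(4,5) in blast)+
qed

lemma consistentD:
  assumes "consistent X Y"
  shows "\<And>e1 e2. e1 \<in> edges X \<Longrightarrow> e2 \<in> edges Y \<Longrightarrow> e1 \<noteq> e2 \<Longrightarrow> e1 \<inter> e2 = {}"
    and "single_valued (vlab X \<union> vlab Y)" "single_valued (elab X \<union> elab Y)"
  using assms unfolding consistent_def by blast+

lemma single_valued_Union_pairwise:
  assumes "\<And>A B. A \<in> \<A> \<Longrightarrow> B \<in> \<A> \<Longrightarrow> single_valued (A \<union> B)"
  shows "single_valued (\<Union>\<A>)"
proof (rule single_valuedI)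
  fix x y z assume "(x, y) \<in> \<Union>\<A>" "(x, z) \<in> \<Union>\<A>"
  then obtain A B where "A \<in> \<A>" "B \<in> \<A>" "(x, y) \<in> A \<union> B" "(x, z) \<in> A \<union> B"
    by blast
  then show "y = z"
    using assms single_valuedD by metis
qed

lemma wf_Gunion:
  assumes "countable S" and S: "\<And>X. X \<in> S \<Longrightarrow> wf_graph X \<and> finite (verts X)"
    and cons: "\<And>X Y. X \<in> S \<Longrightarrow> Y \<in> S \<Longrightarrow> consistent X Y"
  shows "wf_graph (Gunion S)"
  unfolding Gunion_def
proof (rule wf_graphI, unfold graph.simps)
  show "countable (\<Union>(verts ` S))"
    using assms(1) S by (intro countable_UN) (auto intro: countable_finite)
  show "single_valued (\<Union>(vlab ` S))" "single_valued (\<Union>(elab ` S))"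
    by (auto intro!: single_valued_Union_pairwise dest: cons consistentD(2,3))
  show "e1 \<inter> e2 = {}" if "e1 \<in> \<Union>(edges ` S)" "e2 \<in> \<Union>(edges ` S)" "e1 \<noteq> e2" for e1 e2
    using that cons consistentD(1) by blast
  show "card e = 2 \<and> e \<subseteq> \<Union>(verts ` S) \<times> UNIV" if "e \<in> \<Union>(edges ` S)" for e
    using that S wf_graphD(2,3) by blast
  show "Domain (\<Union>(vlab ` S)) \<subseteq> \<Union>(verts ` S)"
    using S wf_graphD(6) by (fastforce simp: Domain_Union)
  show "Domain (\<Union>(elab ` S)) \<subseteq> \<Union>(edges ` S)"
    using S wf_graphD(8) by (fastforce simp: Domain_Union)
qed

lemma relpow_mono:
  fixes R S :: "('a \<times> 'a) set"
  assumes "R \<subseteq> S"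
  shows "R ^^ n \<subseteq> S ^^ n"
  by (induction n) (use assms in auto)

lemma ball_center: "c \<in> ball G c r"
  unfolding ball_def by (rule CollectI, rule exI[of _ 0]) simp

lemma ball_mono: "r \<le> s \<Longrightarrow> ball G c r \<subseteq> ball G c s"
  unfolding ball_def using order.trans by blast

lemma adj_verts: "wf_graph G \<Longrightarrow> (u, v) \<in> adj G \<Longrightarrow> v \<in> verts G"
  unfolding adj_def using wf_graphD(3) by blast

lemma ball_subset_verts:
  assumes "wf_graph G" "c \<in> verts G"
  shows "ball G c r \<subseteq> verts G"
proof
  fix v assume "v \<in> ball G c r"
  then obtain k where "(c, v) \<in> adj G ^^ k"
    unfolding ball_def by blast
  then show "v \<in> verts G"
  proof (induction k arbitrary: v)
    case 0
    then show ?case using assms(2) by simp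
  next
    case (Suc k)
    then show ?case using adj_verts[OF assms(1)] by auto
  qed
qed

lemma edge_endpoint_ball_Suc:
  assumes "e \<in> edges G" "(v, p) \<in> e" "(u, q) \<in> e" "v \<in> ball G c r"
  shows "u \<in> ball G c (Suc r)"
proof -
  have "(v, u) \<in> adj G"
    using assms(1-3) unfolding adj_def by blast
  moreover obtain k where "k \<le> r" "(c, v) \<in> adj G ^^ k"
    using assms(4) unfolding ball_def by blast
  ultimately show ?thesis
    unfolding ball_def by (blast intro: relpow_Suc_I)
qed

lemma disk_simps:
  "verts (fst (disk r G c)) = ball G c (Suc r)"
  "edges (fst (disk r G c)) = {e \<in> edges G. \<exists>v p. (v, p) \<in> e \<and> v \<in> ball G c r}"
  "vlab (fst (disk r G c)) = {(v, a) \<in> vlab G. v \<in> ball G c r}"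
  "elab (fst (disk r G c)) = {(e, a) \<in> elab G. \<exists>v p. (v, p) \<in> e \<and> v \<in> ball G c r}"
  "snd (disk r G c) = c"
  unfolding disk_def by simp_all

lemma disk_subgraph:
  assumes "wf_graph G" "c \<in> verts G"
  shows "subgraph (fst (disk r G c)) G"
  using ball_subset_verts[OF assms] unfolding subgraph_def disk_simps by auto

lemma wf_disk:
  assumes "wf_graph G" "c \<in> verts G"
  shows "wf_graph (fst (disk r G c))"
proof (rule wf_graph_subgraph[OF assms(1) disk_subgraph[OF assms]])
  show "e \<subseteq> verts (fst (disk r G c)) \<times> UNIV" if "e \<in> edges (fst (disk r G c))" for e
    using that edge_endpoint_ball_Suc unfolding disk_simps by fast
  show "Domain (vlab (fst (disk r G c))) \<subseteq> verts (fst (disk r G c))"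
    using ball_mono[of r "Suc r" G c] unfolding disk_simps by auto
  show "Domain (elab (fst (disk r G c))) \<subseteq> edges (fst (disk r G c))"
    using wf_graphD(8)[OF assms(1)] unfolding disk_simps by blast
qed

lemma fst_Disks_in_Graphs: "D \<in> Disks r \<Longrightarrow> fst D \<in> Graphs"
  unfolding Disks_def Graphs_def using wf_disk by fastforce

lemma disk_in_Disks: "wf_graph G \<Longrightarrow> c \<in> verts G \<Longrightarrow> disk r G c \<in> Disks r"
  unfolding Disks_def by blast

text \<open>A walk of length at most r + 1 from the centre only uses edges with an
  endpoint at distance at most r, all of which are kept in the disk.\<close>
lemma walk_in_disk:
  "k \<le> Suc r \<Longrightarrow> (c, u) \<in> adj G ^^ k \<Longrightarrow> (c, u) \<in> adj (fst (disk r G c)) ^^ k"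
proof (induction k arbitrary: u)
  case 0
  then show ?case by simp
next
  case (Suc k)
  from Suc.prems(2) obtain w where w: "(c, w) \<in> adj G ^^ k" "(w, u) \<in> adj G"
    by (rule relpow_Suc_E)
  then have "w \<in> ball G c r"
    using Suc.prems(1) unfolding ball_def by auto
  with w(2) have "(w, u) \<in> adj (fst (disk r G c))"
    unfolding adj_def disk_simps by blast
  moreover have "(c, w) \<in> adj (fst (disk r G c)) ^^ k"
    using Suc w(1) by simp
  ultimately show ?case by auto
qed

lemma ball_disk:
  assumes "k \<le> Suc r"
  shows "ball (fst (disk r G c)) c k = ball G c k"
proof -
  have "adj (fst (disk r G c)) \<subseteq> adj G"
    unfolding adj_def disk_simps by blast
  then have "(c, u) \<in> adj (fst (disk r G c)) ^^ j \<Longrightarrow> (c, u) \<in> adj G ^^ j" for u j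
    using relpow_mono by blast
  moreover have "j \<le> k \<Longrightarrow> (c, u) \<in> adj G ^^ j \<Longrightarrow> (c, u) \<in> adj (fst (disk r G c)) ^^ j" for u j
    using walk_in_disk[of j r] assms by simp
  ultimately show ?thesis
    unfolding ball_def by blast
qed

lemma disk_disk: "disk r (fst (disk r G c)) c = disk r G c"
  unfolding disk_def[of r "fst (disk r G c)"] ball_disk[OF le_SucI[OF order.refl]] ball_disk[OF order.refl]
  by (simp add: disk_def)

lemma local_ruleD:
  assumes "local_rule r f"
  shows "\<And>D. D \<in> Disks r \<Longrightarrow> wf_graph (f D)"
    and "\<And>D. D \<in> Disks r \<Longrightarrow> finite (verts (f D))"
    and "\<And>G u v. wf_graph G \<Longrightarrow> u \<in> verts G \<Longrightarrow> v \<in> verts G \<Longrightarrow>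
           consistent (f (disk r G u)) (f (disk r G v))"
proof -
  have "\<forall>D\<in>Disks r. wf_graph (f D)"
    and "\<exists>b::nat. \<forall>D\<in>Disks r. finite (verts (f D)) \<and> card (verts (f D)) \<le> b"
    and "\<forall>G u v. wf_graph G \<and> u \<in> verts G \<and> v \<in> verts G \<longrightarrow>
           consistent (f (disk r G u)) (f (disk r G v))"
    using assms unfolding local_rule_def by simp_all
  then show "\<And>D. D \<in> Disks r \<Longrightarrow> wf_graph (f D)"
    and "\<And>D. D \<in> Disks r \<Longrightarrow> finite (verts (f D))"
    and "\<And>G u v. wf_graph G \<Longrightarrow> u \<in> verts G \<Longrightarrow> v \<in> verts G \<Longrightarrow>
           consistent (f (disk r G u)) (f (disk r G v))"
    by blast+
qed

lemma wf_Gunion_local_rule: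
  assumes "local_rule r f" "wf_graph G"
  shows "wf_graph (Gunion {f (disk r G v) | v. v \<in> verts G})"
proof (rule wf_Gunion)
  have "{f (disk r G v) | v. v \<in> verts G} = (\<lambda>v. f (disk r G v)) ` verts G"
    by blast
  then show "countable {f (disk r G v) | v. v \<in> verts G}"
    using wf_graphD(1)[OF assms(2)] by simp
  have "disk r G v \<in> Disks r" if "v \<in> verts G" for v
    using assms(2) that by (rule disk_in_Disks)
  then show "wf_graph X \<and> finite (verts X)" if "X \<in> {f (disk r G v) | v. v \<in> verts G}" for X
    using that local_ruleD(1,2)[OF assms(1)] by blast
  show "consistent X Y"
    if "X \<in> {f (disk r G v) | v. v \<in> verts G}" "Y \<in> {f (disk r G v) | v. v \<in> verts G}" for X Y
    using that local_ruleD(3)[OF assms] by blast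
qed

lemma local_image_subgraph_disk_image:
  assumes F: "\<And>G. G \<in> Graphs \<Longrightarrow> F G = Gunion {f (disk r G v) | v. v \<in> verts G}"
    and "wf_graph G" "v \<in> verts G"
  shows "subgraph (f (disk r G v)) (F (fst (disk r G v)))"
proof -
  have "v \<in> verts (fst (disk r G v))"
    using ball_center unfolding disk_simps by fast
  then have "f (disk r (fst (disk r G v)) v) \<in> {f (disk r (fst (disk r G v)) w) | w. w \<in> verts (fst (disk r G v))}"
    by blast
  moreover have "fst (disk r G v) \<in> Graphs"
    using assms(2,3) wf_disk unfolding Graphs_def by simp
  ultimately have "subgraph (f (disk r (fst (disk r G v)) v)) (F (fst (disk r G v)))"
    using F by (simp add: subgraph_Gunion)
  then show ?thesis
    unfolding disk_disk .
qed

lemma monotonic_dynD: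
  "monotonic_dyn F \<Longrightarrow> G \<in> Graphs \<Longrightarrow> H \<in> Graphs \<Longrightarrow> subgraph G H \<Longrightarrow> subgraph (F G) (F H)"
  unfolding monotonic_dyn_def by blast

lemma left_Kan_extension_imp_monotonic_dyn:
  fixes F :: "('v, 'p, 's, 'd) graph \<Rightarrow> ('v, 'p, 's, 'd) graph"
  assumes "left_Kan_extension F"
  shows "monotonic_dyn F"
  unfolding monotonic_dyn_def
proof (intro ballI impI)
  obtain r f where sup: "\<And>G. G \<in> Graphs \<Longrightarrow> is_sup {f D | D. D \<in> Disks r \<and> subgraph (fst D) G} (F G)"
    using assms unfolding left_Kan_extension_def by blast
  fix G H :: "('v, 'p, 's, 'd) graph"
  assume "G \<in> Graphs" "H \<in> Graphs" "subgraph G H"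
  moreover from \<open>subgraph G H\<close>
  have "{f D | D. D \<in> Disks r \<and> subgraph (fst D) G} \<subseteq> {f D | D. D \<in> Disks r \<and> subgraph (fst D) H}"
    using subgraph_trans by blast
  ultimately show "subgraph (F G) (F H)"
    using is_sup_mono sup by blast
qed

lemma CGD_in_Graphs:
  assumes "\<And>G. G \<in> Graphs \<Longrightarrow> F G = Gunion {f (disk r G v) | v. v \<in> verts G}"
    and "local_rule r f" "G \<in> Graphs"
  shows "F G \<in> Graphs"
  using assms wf_Gunion_local_rule unfolding Graphs_def by simp

lemma monotonic_CGD_is_sup_disk_images:
  assumes F: "\<And>G. G \<in> Graphs \<Longrightarrow> F G = Gunion {f (disk r G v) | v. v \<in> verts G}"
    and "local_rule r f" "monotonic_dyn F" and G: "G \<in> Graphs"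
  shows "is_sup {F (fst D) | D. D \<in> Disks r \<and> subgraph (fst D) G} (F G)"
  unfolding is_sup_def
proof (intro conjI ballI impI)
  show "F G \<in> Graphs"
    using CGD_in_Graphs[OF F assms(2) G] .
  show "subgraph Y (F G)" if "Y \<in> {F (fst D) | D. D \<in> Disks r \<and> subgraph (fst D) G}" for Y
    using that monotonic_dynD[OF assms(3) fst_Disks_in_Graphs G] by blast
  fix Z assume upper: "\<forall>Y \<in> {F (fst D) | D. D \<in> Disks r \<and> subgraph (fst D) G}. subgraph Y Z"
  have wfG: "wf_graph G"
    using G unfolding Graphs_def by simp
  show "subgraph (F G) Z"
    unfolding F[OF G]
  proof (rule Gunion_least)
    fix Y assume "Y \<in> {f (disk r G v) | v. v \<in> verts G}"
    then obtain v where v: "v \<in> verts G" and Y: "Y = f (disk r G v)"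
      by blast
    have "subgraph (F (fst (disk r G v))) Z"
      using upper disk_in_Disks[OF wfG v] disk_subgraph[OF wfG v] by blast
    then show "subgraph Y Z"
      unfolding Y using local_image_subgraph_disk_image[OF F wfG v] subgraph_trans by blast
  qed
qed

lemma monotonic_CGD_imp_left_Kan_extension:
  assumes "\<And>G. G \<in> Graphs \<Longrightarrow> F G = Gunion {f (disk r G v) | v. v \<in> verts G}"
    and "local_rule r f" "monotonic_dyn F"
  shows "left_Kan_extension F"
  unfolding left_Kan_extension_def
proof (intro exI[of _ r] exI[of _ "\<lambda>D. F (fst D)"] conjI ballI impI)
  show "F (fst D) \<in> Graphs" if "D \<in> Disks r" for D
    using CGD_in_Graphs[OF assms(1,2) fst_Disks_in_Graphs[OF that]] .
  show "subgraph (F (fst D)) (F (fst D'))" if "D \<in> Disks r" "D' \<in> Disks r" "subdisk D D'" for D D'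
    using that monotonic_dynD[OF assms(3) fst_Disks_in_Graphs fst_Disks_in_Graphs] unfolding subdisk_def by blast
  show "is_sup {F (fst D) | D. D \<in> Disks r \<and> subgraph (fst D) G} (F G)" if "G \<in> Graphs" for G
    using monotonic_CGD_is_sup_disk_images[OF assms that] .
qed

theorem corollary2p10:
  fixes F :: "('v, 'p::finite, 's, 'd) graph \<Rightarrow> ('v, 'p, 's, 'd) graph"
  assumes "uncountable (UNIV :: 'v set)"
    and "is_CGD F"
  shows "monotonic_dyn F \<longleftrightarrow> left_Kan_extension F"
proof
  obtain r f where "local_rule r f"
    and "\<And>G. G \<in> Graphs \<Longrightarrow> F G = Gunion {f (disk r G v) | v. v \<in> verts G}"
    using assms(2) unfolding is_CGD_def by blast
  then show "monotonic_dyn F \<Longrightarrow> left_Kan_extension F"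
    using monotonic_CGD_imp_left_Kan_extension by blast
  show "left_Kan_extension F \<Longrightarrow> monotonic_dyn F"
    by (rule left_Kan_extension_imp_monotonic_dyn)
qed

end
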